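(* Let $K$ be a field and $\nu$ a valuation on $K[x]$. Every key polynomial for $\nu$ is irreducible in $K[x]$.
   Context: $\nu:K[x]\to\Gamma\cup\{\infty\}$ is a valuation ($\Gamma$ an ordered abelian group) with $\nu(f)=\infty$ only for $f=0$; $\Gamma'=\Gamma\otimes\mathbb{Q}$. For $k\in\mathbb{N}$, $\partial_kf=\frac{1}{k!}\frac{d^kf}{dx^k}$. For nonconstant $f$, $\epsilon(f)=\max\{(\nu(f)-\nu(\partial_kf))/k\mid 1\le k\le\deg f,\ \partial_kf\ne0\}\in\Gamma'$. A key polynomial is a monic nonconstant $Q\in K[x]$ such that every nonconstant $f\in K[x]$ with $\epsilon(f)\ge\epsilon(Q)$ satisfies $\deg f\ge\deg Q$. *)

theory Defs
  imports "HOL-Computational_Algebra.Polynomial"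
begin

text \<open>We represent nu by its values on nonzero polynomials; the value at 0 (infinity) is never used
  below, since only nonzero arguments occur.\<close>
definition valuation :: "('a::field poly \<Rightarrow> 'g::linordered_ab_group_add) \<Rightarrow> bool" where
  "valuation \<nu> \<longleftrightarrow>
     (\<forall>f g. f \<noteq> 0 \<longrightarrow> g \<noteq> 0 \<longrightarrow> \<nu> (f * g) = \<nu> f + \<nu> g) \<and>
     (\<forall>f g. f \<noteq> 0 \<longrightarrow> g \<noteq> 0 \<longrightarrow> f + g \<noteq> 0 \<longrightarrow> min (\<nu> f) (\<nu> g) \<le> \<nu> (f + g))"

text \<open>Hasse derivative: partial_k f = (1/k!) d^k f / dx^k (characteristic-free form).\<close>
definition hasse_deriv :: "nat \<Rightarrow> 'a::comm_ring_1 poly \<Rightarrow> 'a poly" where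
  "hasse_deriv k f = Abs_poly (\<lambda>i. of_nat ((i + k) choose k) * coeff f (i + k))"

definition nsmul :: "nat \<Rightarrow> 'g::ab_group_add \<Rightarrow> 'g" where
  "nsmul n a = (\<Sum>_<n. a)"

text \<open>Elements of Gamma' = Gamma (x) Q represented as fractions (g, k) meaning g/k with k > 0;
  since Gamma is torsion-free, (g,k) <= (h,l) iff l*g <= k*h in Gamma.\<close>
definition frac_le :: "'g::linordered_ab_group_add \<times> nat \<Rightarrow> 'g \<times> nat \<Rightarrow> bool" where
  "frac_le p q \<longleftrightarrow> nsmul (snd q) (fst p) \<le> nsmul (snd p) (fst q)"

text \<open>The candidate values (nu f - nu (partial_k f)) / k whose maximum is epsilon(f).\<close>
definition eps_cands :: "('a::field poly \<Rightarrow> 'g::linordered_ab_group_add) \<Rightarrow> 'a poly \<Rightarrow> ('g \<times> nat) set" where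
  "eps_cands \<nu> f = {(\<nu> f - \<nu> (hasse_deriv k f), k) | k. 1 \<le> k \<and> k \<le> degree f \<and> hasse_deriv k f \<noteq> 0}"

definition eps_le :: "('a::field poly \<Rightarrow> 'g::linordered_ab_group_add) \<Rightarrow> 'a poly \<Rightarrow> 'a poly \<Rightarrow> bool" where
  "eps_le \<nu> g f \<longleftrightarrow> (\<exists>p\<in>eps_cands \<nu> f. \<forall>q\<in>eps_cands \<nu> g. frac_le q p)"

definition key_polynomial :: "('a::field poly \<Rightarrow> 'g::linordered_ab_group_add) \<Rightarrow> 'a poly \<Rightarrow> bool" where
  "key_polynomial \<nu> Q \<longleftrightarrow> lead_coeff Q = 1 \<and> degree Q \<ge> 1 \<and>
     (\<forall>f. degree f \<ge> 1 \<longrightarrow> eps_le \<nu> Q f \<longrightarrow> degree f \<ge> degree Q)"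

end

theory Submission
  imports Defs
begin

text \<open>
  The Hasse derivatives satisfy the Leibniz rule
  \<open>\<partial>\<^sub>k(gh) = \<Sum>\<^sub>i \<partial>\<^sub>ig \<partial>\<^sub>k\<^sub>-\<^sub>ih\<close>, so the ultrametric inequality gives, for each \<open>k\<close>, some \<open>i\<close> with
  \<open>\<nu>(gh) - \<nu>(\<partial>\<^sub>k(gh)) \<le> (\<nu>g - \<nu>(\<partial>\<^sub>ig)) + (\<nu>h - \<nu>(\<partial>\<^sub>k\<^sub>-\<^sub>ih))\<close>. Bounding the two summands by
  \<open>i\<cdot>\<epsilon>\<close> and \<open>(k-i)\<cdot>\<epsilon>\<close>, where \<open>\<epsilon> = max(\<epsilon>(g), \<epsilon>(h))\<close>, shows \<open>\<epsilon>(gh) \<le> max(\<epsilon>(g), \<epsilon>(h))\<close>.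
  Hence a nontrivial factorisation \<open>Q = gh\<close> produces a factor of smaller degree whose \<open>\<epsilon>\<close>
  is at least \<open>\<epsilon>(Q)\<close>, which a key polynomial forbids.
\<close>

lemma nsmul_0 [simp]: "nsmul 0 a = 0"
  by (simp add: nsmul_def)

lemma nsmul_zero [simp]: "nsmul n 0 = 0"
  by (simp add: nsmul_def)

lemma nsmul_Suc: "nsmul (Suc n) a = a + nsmul n a"
  by (simp add: nsmul_def)

lemma nsmul_add: "nsmul (m + n) a = nsmul m a + nsmul n a"
  by (induction m) (simp_all add: nsmul_Suc add.assoc)

lemma nsmul_add_right: "nsmul n (a + b) = nsmul n a + nsmul n b"
  by (simp add: nsmul_def sum.distrib)

lemma nsmul_mult: "nsmul (m * n) a = nsmul m (nsmul n a)"
  by (induction m) (simp_all add: nsmul_Suc nsmul_add)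

lemma nsmul_commute: "nsmul m (nsmul n a) = nsmul n (nsmul m a)"
  by (metis nsmul_mult mult.commute)

lemma nsmul_mono: "(a::'g::linordered_ab_group_add) \<le> b \<Longrightarrow> nsmul n a \<le> nsmul n b"
  by (simp add: nsmul_def sum_mono)

lemma nsmul_le_cancel:
  assumes "nsmul n (a::'g::linordered_ab_group_add) \<le> nsmul n b" "0 < n"
  shows "a \<le> b"
proof (rule ccontr)
  assume "\<not> a \<le> b"
  then have "nsmul n b < nsmul n a"
    using \<open>0 < n\<close> by (auto simp: nsmul_def not_le intro!: sum_strict_mono)
  with assms(1) show False by simp
qed

lemma frac_le_refl: "frac_le p p"
  by (simp add: frac_le_def)

lemma frac_le_total: "frac_le p q \<or> frac_le q (p :: 'g::linordered_ab_group_add \<times> nat)"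
  by (auto simp: frac_le_def)

lemma frac_le_trans:
  assumes "frac_le p q" "frac_le q (r :: 'g::linordered_ab_group_add \<times> nat)" "0 < snd q"
  shows "frac_le p r"
proof -
  obtain x k y l z m where pqr: "p = (x, k)" "q = (y, l)" "r = (z, m)"
    by (metis prod.exhaust)
  have xy: "nsmul l x \<le> nsmul k y" and yz: "nsmul m y \<le> nsmul l z"
    using assms(1,2) by (simp_all add: frac_le_def pqr)
  have "nsmul l (nsmul m x) = nsmul m (nsmul l x)" by (rule nsmul_commute)
  also have "\<dots> \<le> nsmul m (nsmul k y)" using xy by (rule nsmul_mono)
  also have "\<dots> = nsmul k (nsmul m y)" by (rule nsmul_commute)
  also have "\<dots> \<le> nsmul k (nsmul l z)" using yz by (rule nsmul_mono)
  also have "\<dots> = nsmul l (nsmul k z)" by (rule nsmul_commute)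
  finally have "nsmul m x \<le> nsmul k z"
    using assms(3) nsmul_le_cancel by (simp add: pqr)
  then show ?thesis by (simp add: frac_le_def pqr)
qed

lemma frac_le_max_exists:
  fixes S :: "('g::linordered_ab_group_add \<times> nat) set"
  assumes "finite S" "S \<noteq> {}" "\<forall>p\<in>S. 0 < snd p"
  shows "\<exists>p\<in>S. \<forall>q\<in>S. frac_le q p"
  using assms
proof (induction S rule: finite_ne_induct)
  case (singleton x)
  then show ?case by (simp add: frac_le_refl)
next
  case (insert x S)
  then obtain p where p: "p \<in> S" "\<forall>q\<in>S. frac_le q p" by auto
  show ?case
  proof (cases "frac_le x p")
    case True
    then show ?thesis using p by (auto simp: frac_le_refl)
  next
    case False
    then have "frac_le p x" using frac_le_total by blast
    then have "\<forall>q\<in>S. frac_le q x"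
      using p insert.prems frac_le_trans by blast
    then show ?thesis by (auto simp: frac_le_refl)
  qed
qed

lemma coeff_hasse_deriv: "coeff (hasse_deriv k f) i = of_nat ((i + k) choose k) * coeff f (i + k)"
proof -
  have "coeff (hasse_deriv k f) = (\<lambda>i. of_nat ((i + k) choose k) * coeff f (i + k))"
    unfolding hasse_deriv_def by (rule coeff_Abs_poly[where n = "degree f"]) (simp add: coeff_eq_0)
  then show ?thesis by simp
qed

lemma hasse_deriv_0 [simp]: "hasse_deriv 0 f = f"
  by (rule poly_eqI) (simp add: coeff_hasse_deriv)

lemma hasse_deriv_of_zero [simp]: "hasse_deriv k 0 = 0"
  by (rule poly_eqI) (simp add: coeff_hasse_deriv)

lemma hasse_deriv_eq_0: "degree f < k \<Longrightarrow> hasse_deriv k f = 0"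
  by (rule poly_eqI) (simp add: coeff_hasse_deriv coeff_eq_0)

lemma hasse_deriv_degree_neq_0: "f \<noteq> 0 \<Longrightarrow> hasse_deriv (degree f) f \<noteq> 0"
proof
  assume "f \<noteq> 0" "hasse_deriv (degree f) f = 0"
  then have "coeff (hasse_deriv (degree f) f) 0 = 0" by simp
  with \<open>f \<noteq> 0\<close> show False by (simp add: coeff_hasse_deriv)
qed

lemma hasse_deriv_pCons:
  "hasse_deriv (Suc k) (pCons a f) = pCons 0 (hasse_deriv (Suc k) f) + hasse_deriv k f"
proof (rule poly_eqI)
  fix i
  show "coeff (hasse_deriv (Suc k) (pCons a f)) i =
        coeff (pCons 0 (hasse_deriv (Suc k) f) + hasse_deriv k f) i"
  proof (cases i)
    case 0
    then show ?thesis by (simp add: coeff_hasse_deriv)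
  next
    case (Suc j)
    have "(Suc j + Suc k) choose Suc k = ((j + Suc k) choose Suc k) + ((Suc j + k) choose k)"
      by simp
    then show ?thesis using Suc by (simp add: coeff_hasse_deriv algebra_simps)
  qed
qed

lemma map_poly_hom_mult:
  assumes "\<phi> 0 = 0" "\<And>x y. \<phi> (x + y) = \<phi> x + \<phi> y" "\<And>x y. \<phi> (x * y) = \<phi> x * \<phi> y"
  shows "map_poly \<phi> (p * q) = map_poly \<phi> p * map_poly (\<phi> :: 'a::comm_semiring_0 \<Rightarrow> 'b::comm_semiring_0) q"
proof (induction p)
  case 0
  then show ?case by simp
next
  case (pCons a p)
  have map_add: "map_poly \<phi> (r + s) = map_poly \<phi> r + map_poly \<phi> s" for r s
    by (rule poly_eqI) (simp add: coeff_map_poly assms)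
  have "map_poly \<phi> (pCons a p * q) = map_poly \<phi> (smult a q) + map_poly \<phi> (pCons 0 (p * q))"
    by (simp add: map_add)
  also have "\<dots> = smult (\<phi> a) (map_poly \<phi> q) + pCons 0 (map_poly \<phi> p * map_poly \<phi> q)"
    using pCons.IH by (simp add: map_poly_smult map_poly_pCons assms)
  also have "\<dots> = map_poly \<phi> (pCons a p) * map_poly \<phi> q"
    by (simp add: map_poly_pCons assms)
  finally show ?case .
qed

text \<open>
  The expansion \<open>f(x + Y) = \<Sum>\<^sub>k \<partial>\<^sub>kf(x) Y\<^sup>k\<close>, as a polynomial in \<open>Y\<close> over \<open>K[x]\<close>; since
  \<open>f \<mapsto> f(x + Y)\<close> is a ring homomorphism, it yields the Leibniz rule.
\<close>

definition hasse_expansion :: "'a::comm_ring_1 poly \<Rightarrow> 'a poly poly" where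
  "hasse_expansion f = pcompose (map_poly (\<lambda>c. [:c:]) f) [:[:0, 1:], 1:]"

lemma hasse_expansion_mult: "hasse_expansion (f * g) = hasse_expansion f * hasse_expansion g"
proof -
  have "map_poly (\<lambda>c. [:c:]) (f * g) = map_poly (\<lambda>c. [:c:]) f * map_poly (\<lambda>c. [:c:]) g"
    by (rule map_poly_hom_mult) simp_all
  then show ?thesis by (simp add: hasse_expansion_def pcompose_mult)
qed

lemma hasse_expansion_pCons:
  "hasse_expansion (pCons a f) =
     [:[:a:]:] + smult [:0, 1:] (hasse_expansion f) + pCons 0 (hasse_expansion f)"
  by (simp add: hasse_expansion_def map_poly_pCons pcompose_pCons)

lemma coeff_hasse_expansion: "coeff (hasse_expansion f) k = hasse_deriv k f"
proof (induction f arbitrary: k)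
  case 0
  then show ?case by (simp add: hasse_expansion_def)
next
  case (pCons a f)
  show ?case
  proof (cases k)
    case 0
    then show ?thesis
      using pCons.IH[of 0] by (simp add: hasse_expansion_pCons)
  next
    case (Suc j)
    then show ?thesis
      using pCons.IH[of k] pCons.IH[of j] hasse_deriv_pCons[of j a f]
      by (simp add: hasse_expansion_pCons)
  qed
qed

lemma hasse_deriv_mult:
  "hasse_deriv k (f * g) = (\<Sum>i\<le>k. hasse_deriv i f * hasse_deriv (k - i) g)"
  by (simp only: coeff_hasse_expansion[symmetric] hasse_expansion_mult coeff_mult)

lemma valuation_sum_witness:
  fixes \<nu> :: "'a::field poly \<Rightarrow> 'g::linordered_ab_group_add"
  assumes v: "valuation \<nu>" and "finite S" "sum F S \<noteq> 0"
  shows "\<exists>i\<in>S. F i \<noteq> 0 \<and> \<nu> (F i) \<le> \<nu> (sum F S)"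
  using assms(2,3)
proof (induction S rule: finite_induct)
  case empty
  then show ?case by simp
next
  case (insert x S)
  have sum_insert: "sum F (insert x S) = F x + sum F S"
    using insert.hyps by simp
  show ?case
  proof (cases "F x = 0 \<or> sum F S = 0")
    case True
    then show ?thesis using insert sum_insert by auto
  next
    case False
    then obtain i where i: "i \<in> S" "F i \<noteq> 0" "\<nu> (F i) \<le> \<nu> (sum F S)"
      using insert by auto
    have "min (\<nu> (F x)) (\<nu> (sum F S)) \<le> \<nu> (sum F (insert x S))"
      using v False insert.prems sum_insert unfolding valuation_def by auto
    then show ?thesis
      using i False by (cases "\<nu> (F x) \<le> \<nu> (sum F S)") (auto simp: min_def)
  qed
qed

lemma finite_eps_cands: "finite (eps_cands \<nu> f)"
proof -
  have "eps_cands \<nu> f \<subseteq> (\<lambda>k. (\<nu> f - \<nu> (hasse_deriv k f), k)) ` {..degree f}"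
    unfolding eps_cands_def by auto
  then show ?thesis by (rule finite_subset) simp
qed

lemma eps_cands_denom_pos: "p \<in> eps_cands \<nu> f \<Longrightarrow> 0 < snd p"
  unfolding eps_cands_def by auto

lemma eps_cands_nonempty: "1 \<le> degree f \<Longrightarrow> eps_cands \<nu> f \<noteq> {}"
  unfolding eps_cands_def
  using hasse_deriv_degree_neq_0[of f] by fastforce

definition eps_bounded :: "('a::field poly \<Rightarrow> 'g::linordered_ab_group_add) \<Rightarrow> 'a poly \<Rightarrow> 'g \<times> nat \<Rightarrow> bool"
  where "eps_bounded \<nu> f p \<longleftrightarrow> (\<forall>q\<in>eps_cands \<nu> f. frac_le q p)"

lemma eps_le_iff_eps_bounded: "eps_le \<nu> g f \<longleftrightarrow> (\<exists>p\<in>eps_cands \<nu> f. eps_bounded \<nu> g p)"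
  by (simp add: eps_le_def eps_bounded_def)

lemma eps_bounded_hasse_deriv:
  assumes "eps_bounded \<nu> f (m, n)" "hasse_deriv i f \<noteq> 0"
  shows "nsmul n (\<nu> f - \<nu> (hasse_deriv i f)) \<le> nsmul i m"
proof (cases "i = 0")
  case True
  then show ?thesis by simp
next
  case False
  have "i \<le> degree f"
    using assms(2) hasse_deriv_eq_0[of f i] by linarith
  then have "(\<nu> f - \<nu> (hasse_deriv i f), i) \<in> eps_cands \<nu> f"
    using False assms(2) unfolding eps_cands_def by auto
  then show ?thesis
    using assms(1) by (auto simp: eps_bounded_def frac_le_def)
qed

lemma eps_bounded_mult:
  fixes \<nu> :: "'a::field poly \<Rightarrow> 'g::linordered_ab_group_add"
  assumes v: "valuation \<nu>" and "g \<noteq> 0" "h \<noteq> 0"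
    and bounded: "eps_bounded \<nu> g (m, n)" "eps_bounded \<nu> h (m, n)"
  shows "eps_bounded \<nu> (g * h) (m, n)"
  unfolding eps_bounded_def
proof
  fix q assume "q \<in> eps_cands \<nu> (g * h)"
  then obtain k where q: "q = (\<nu> (g * h) - \<nu> (hasse_deriv k (g * h)), k)"
    and "hasse_deriv k (g * h) \<noteq> 0"
    unfolding eps_cands_def by auto
  then have "(\<Sum>i\<le>k. hasse_deriv i g * hasse_deriv (k - i) h) \<noteq> 0"
    by (simp add: hasse_deriv_mult)
  from valuation_sum_witness[OF v _ this] obtain i where "i \<le> k"
    and gi: "hasse_deriv i g \<noteq> 0" and hi: "hasse_deriv (k - i) h \<noteq> 0"
    and vi: "\<nu> (hasse_deriv i g * hasse_deriv (k - i) h) \<le> \<nu> (hasse_deriv k (g * h))"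
    by (auto simp: hasse_deriv_mult[symmetric])
  have "\<nu> (g * h) - \<nu> (hasse_deriv k (g * h)) \<le>
      (\<nu> g - \<nu> (hasse_deriv i g)) + (\<nu> h - \<nu> (hasse_deriv (k - i) h))"
    using vi v gi hi assms(2,3) unfolding valuation_def by (simp add: algebra_simps)
  then have "nsmul n (\<nu> (g * h) - \<nu> (hasse_deriv k (g * h))) \<le>
      nsmul n (\<nu> g - \<nu> (hasse_deriv i g)) + nsmul n (\<nu> h - \<nu> (hasse_deriv (k - i) h))"
    by (metis nsmul_add_right nsmul_mono)
  also have "\<dots> \<le> nsmul i m + nsmul (k - i) m"
    using eps_bounded_hasse_deriv[OF bounded(1) gi] eps_bounded_hasse_deriv[OF bounded(2) hi]
    by (rule add_mono)
  also have "\<dots> = nsmul k m"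
    using \<open>i \<le> k\<close> by (simp add: nsmul_add[symmetric])
  finally show "frac_le q (m, n)"
    by (simp add: q frac_le_def)
qed

lemma eps_le_factor:
  fixes \<nu> :: "'a::field poly \<Rightarrow> 'g::linordered_ab_group_add"
  assumes "valuation \<nu>" "1 \<le> degree g" "1 \<le> degree h"
  shows "eps_le \<nu> (g * h) g \<or> eps_le \<nu> (g * h) h"
proof -
  let ?S = "eps_cands \<nu> g \<union> eps_cands \<nu> h"
  have "\<exists>p\<in>?S. \<forall>q\<in>?S. frac_le q p"
    using finite_eps_cands eps_cands_nonempty[OF assms(2)] eps_cands_denom_pos
    by (intro frac_le_max_exists) auto
  then obtain p where p: "p \<in> ?S" "eps_bounded \<nu> g p" "eps_bounded \<nu> h p"
    by (auto simp: eps_bounded_def)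
  have "g \<noteq> 0" "h \<noteq> 0"
    using assms(2,3) by auto
  then have "eps_bounded \<nu> (g * h) p"
    using eps_bounded_mult[OF assms(1), of g h "fst p" "snd p"] p by simp
  then show ?thesis
    using p(1) by (auto simp: eps_le_iff_eps_bounded)
qed

theorem corollary4p4:
  fixes \<nu> :: "'a::field poly \<Rightarrow> 'g::linordered_ab_group_add"
    and Q :: "'a poly"
  assumes "valuation \<nu>"
    and "key_polynomial \<nu> Q"
  shows "irreducible Q"
proof (rule irreducibleI)
  have lc: "lead_coeff Q = 1" and deg: "degree Q \<ge> 1"
    and minimal: "\<And>f. degree f \<ge> 1 \<Longrightarrow> eps_le \<nu> Q f \<Longrightarrow> degree f \<ge> degree Q"
    using assms(2) unfolding key_polynomial_def by auto
  show "Q \<noteq> 0" using lc by auto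
  then show "\<not> is_unit Q" using deg by (auto simp: is_unit_iff_degree)
  fix g h assume Q: "Q = g * h"
  show "is_unit g \<or> is_unit h"
  proof (rule ccontr)
    assume "\<not> (is_unit g \<or> is_unit h)"
    with \<open>Q \<noteq> 0\<close> Q have "1 \<le> degree g" "1 \<le> degree h"
      by (auto simp: is_unit_iff_degree)
    moreover have "degree Q = degree g + degree h"
      using \<open>Q \<noteq> 0\<close> Q by (simp add: degree_mult_eq)
    ultimately show False
      using eps_le_factor[OF assms(1), of g h] minimal Q by fastforce
  qed
qed

end
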